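(* Let $\mathcal{I}$ be an interval hypergraph on $[n]$ and $A$ an acyclic orientation of $\mathcal{I}$. (1) Let $B$ be an orientation obtained from $A$ by an increasing flip with respect to $i<j$, and let $k=\max\{\max(I): I\in\mathcal{I},\ A(I)=i\}$. Then $B$ is acyclic if and only if there is no $J\in\mathcal{I}$ with $j\in J\setminus\{A(J)\}$ and $A(J)\in\,]i,k]$. (2) Symmetrically, let $B$ be an orientation obtained from $A$ by a decreasing flip with respect to $j<i$, and let $k=\min\{\min(I): I\in\mathcal{I},\ A(I)=i\}$. Then $B$ is acyclic if and only if there is no $J\in\mathcal{I}$ with $j\in J\setminus\{A(J)\}$ and $A(J)\in[k,i[$.
   Context: An interval hypergraph $\mathcal{I}$ on $[n]$ is a collection of intervals of $[n]$ containing all singletons. An orientation is a map $O:\mathcal{I}\to[n]$ with $O(I)\in I$; it is acyclic if there are no $H_1,\dots,H_k$, $k\ge2$, with $O(H_{i+1})\in H_i\setminus\{O(H_i)\}$ for $i\in[k-1]$ and $O(H_1)\in H_k\setminus\{O(H_k)\}$. For distinct $i,j\in[n]$, an orientation $O'\neq O$ is obtained from $O$ by a flip of $i$ to $j$ if for all $H\in\mathcal{I}$: if $O(H)\ne O'(H)$ then $O(H)=i$ and $O'(H)=j$; and if $\{i,j\}\subseteq H$ then $O(H)=i\iff O'(H)=j$. The flip is increasing if $i<j$ and decreasing if $i>j$. Here $]a,b]=\{a+1,\dots,b\}$ and $[a,b[=\{a,\dots,b-1\}$. *)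

theory Defs
  imports Main
begin

definition is_interval :: "nat \<Rightarrow> nat set \<Rightarrow> bool" where
  "is_interval n I \<longleftrightarrow> (\<exists>a b. 1 \<le> a \<and> a \<le> b \<and> b \<le> n \<and> I = {a..b})"

definition interval_hypergraph :: "nat \<Rightarrow> nat set set \<Rightarrow> bool" where
  "interval_hypergraph n \<I> \<longleftrightarrow>
     (\<forall>I\<in>\<I>. is_interval n I) \<and> (\<forall>x\<in>{1..n}. {x} \<in> \<I>)"

definition orientation :: "nat set set \<Rightarrow> (nat set \<Rightarrow> nat) \<Rightarrow> bool" where
  "orientation \<I> Or \<longleftrightarrow> (\<forall>I\<in>\<I>. Or I \<in> I)"

definition acyclic_orientation :: "nat set set \<Rightarrow> (nat set \<Rightarrow> nat) \<Rightarrow> bool" where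
  "acyclic_orientation \<I> Or \<longleftrightarrow>
     \<not> (\<exists>(k::nat) (H::nat \<Rightarrow> nat set). k \<ge> 2 \<and> (\<forall>l\<in>{1..k}. H l \<in> \<I>) \<and>
          (\<forall>l\<in>{1..k-1}. Or (H (l+1)) \<in> H l - {Or (H l)}) \<and>
          Or (H 1) \<in> H k - {Or (H k)})"

definition flip :: "nat set set \<Rightarrow> (nat set \<Rightarrow> nat) \<Rightarrow> nat \<Rightarrow> nat \<Rightarrow> (nat set \<Rightarrow> nat) \<Rightarrow> bool" where
  "flip \<I> Or i j Or2 \<longleftrightarrow>
     i \<noteq> j \<and> (\<exists>H\<in>\<I>. Or H \<noteq> Or2 H) \<and>
     (\<forall>H\<in>\<I>. (Or H \<noteq> Or2 H \<longrightarrow> Or H = i \<and> Or2 H = j) \<and>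
              ({i, j} \<subseteq> H \<longrightarrow> (Or H = i \<longleftrightarrow> Or2 H = j)))"

end

theory Submission
  imports Defs
begin

text \<open>
  An orientation O is acyclic exactly when the digraph with arcs O(H) \<rightarrow> b, b \<in> H - {O(H)},
  is acyclic. A flip of i to j only redirects the arcs of the hyperedges F = {H. A(H) = i, j \<in> H},
  which now leave j. Hence a cycle of B runs j \<rightarrow> v for some v in some H \<in> F and then returns
  to j along arcs of A from hyperedges outside F. Since hyperedges are intervals, an arc that
  jumps over a vertex can be shortened to end there; so in the acyclic digraph of A the
  return path enters j from some u between v and j, i.e. u \<in> H, through a hyperedge J with
  A(J) = u \<noteq> i. Conversely such a J closes the cycle j \<rightarrow> A(J) \<rightarrow> j or j \<rightarrow> i \<rightarrow> A(J) \<rightarrow> j.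
  Finally, the hyperedges oriented to i all contain i, so their union is the interval
  [min, max] of the statement, and acyclicity of A forces A(J) onto the same side of i as j.
\<close>

definition orientation_arcs :: "nat set set \<Rightarrow> (nat set \<Rightarrow> nat) \<Rightarrow> nat rel" where
  "orientation_arcs S Or = {(Or H, b) | H b. H \<in> S \<and> b \<in> H - {Or H}}"

lemma mem_orientation_arcs:
  "(a, b) \<in> orientation_arcs S Or \<longleftrightarrow> (\<exists>H\<in>S. Or H = a \<and> b \<in> H \<and> b \<noteq> a)"
  unfolding orientation_arcs_def by auto

lemma orientation_arcs_mono: "S \<subseteq> T \<Longrightarrow> orientation_arcs S Or \<subseteq> orientation_arcs T Or"
  unfolding orientation_arcs_def by auto

lemma chain_imp_trancl_orientation_arcs:
  fixes k :: nat
  assumes "1 \<le> k" "\<forall>l\<in>{1..k}. H l \<in> S"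
    and "\<forall>l\<in>{1..k-1}. Or (H (l+1)) \<in> H l - {Or (H l)}"
    and "y \<in> H k - {Or (H k)}"
  shows "(Or (H 1), y) \<in> (orientation_arcs S Or)\<^sup>+"
  using assms
proof (induction k arbitrary: y rule: nat_induct_at_least)
  case base
  then show ?case by (intro r_into_trancl) (auto simp: mem_orientation_arcs)
next
  case (Suc k)
  have "(Or (H 1), Or (H (Suc k))) \<in> (orientation_arcs S Or)\<^sup>+"
    using Suc by (intro Suc.IH) auto
  moreover have "(Or (H (Suc k)), y) \<in> orientation_arcs S Or"
    using Suc.prems by (auto simp: mem_orientation_arcs)
  ultimately show ?case ..
qed

lemma trancl_orientation_arcs_imp_chain:
  assumes "(x, y) \<in> (orientation_arcs S Or)\<^sup>+"
  obtains k :: nat and H where "1 \<le> k" "\<forall>l\<in>{1..k}. H l \<in> S"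
    and "\<forall>l\<in>{1..k-1}. Or (H (l+1)) \<in> H l - {Or (H l)}"
    and "Or (H 1) = x" "y \<in> H k - {Or (H k)}"
proof -
  have "\<exists>k::nat. \<exists>H. 1 \<le> k \<and> (\<forall>l\<in>{1..k}. H l \<in> S) \<and>
      (\<forall>l\<in>{1..k-1}. Or (H (l+1)) \<in> H l - {Or (H l)}) \<and> Or (H 1) = x \<and> y \<in> H k - {Or (H k)}"
    using assms
  proof (induction rule: trancl_induct)
    case (base y)
    then obtain G where "G \<in> S" "Or G = x" "y \<in> G - {x}"
      by (auto simp: mem_orientation_arcs)
    then show ?case by (intro exI[of _ "1::nat"] exI[of _ "\<lambda>_. G"]) auto
  next
    case (step y z)
    then obtain k :: nat and H where k: "1 \<le> k" "\<forall>l\<in>{1..k}. H l \<in> S"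
      "\<forall>l\<in>{1..k-1}. Or (H (l+1)) \<in> H l - {Or (H l)}" "Or (H 1) = x" "y \<in> H k - {Or (H k)}"
      by blast
    from step.hyps(2) obtain G where G: "G \<in> S" "Or G = y" "z \<in> G - {y}"
      by (auto simp: mem_orientation_arcs)
    let ?H = "H(k+1 := G)"
    have "\<forall>l\<in>{1..k+1-1}. Or (?H (l+1)) \<in> ?H l - {Or (?H l)}"
      using k G by (auto simp: less_Suc_eq_le)
    with k G show ?case by (intro exI[of _ "k+1"] exI[of _ ?H]) auto
  qed
  with that show ?thesis by blast
qed

lemma acyclic_orientation_iff_acyclic_arcs:
  "acyclic_orientation S Or \<longleftrightarrow> acyclic (orientation_arcs S Or)"
proof
  assume acyclic_Or: "acyclic_orientation S Or"
  show "acyclic (orientation_arcs S Or)"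
  proof (rule acyclicI, intro allI notI)
    fix x assume "(x, x) \<in> (orientation_arcs S Or)\<^sup>+"
    then obtain k :: nat and H where "1 \<le> k" "\<forall>l\<in>{1..k}. H l \<in> S"
      "\<forall>l\<in>{1..k-1}. Or (H (l+1)) \<in> H l - {Or (H l)}" "Or (H 1) = x" "x \<in> H k - {Or (H k)}"
      by (rule trancl_orientation_arcs_imp_chain)
    moreover from this have "2 \<le> k"
      by (cases "k = 1") auto
    ultimately show False
      using acyclic_Or unfolding acyclic_orientation_def by blast
  qed
next
  assume acyclic_arcs: "acyclic (orientation_arcs S Or)"
  show "acyclic_orientation S Or"
    unfolding acyclic_orientation_def
  proof (intro notI, elim exE conjE)
    fix k :: nat and H
    assume "2 \<le> k" "\<forall>l\<in>{1..k}. H l \<in> S" "\<forall>l\<in>{1..k-1}. Or (H (l+1)) \<in> H l - {Or (H l)}"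
      "Or (H 1) \<in> H k - {Or (H k)}"
    then have "(Or (H 1), Or (H 1)) \<in> (orientation_arcs S Or)\<^sup>+"
      by (intro chain_imp_trancl_orientation_arcs) auto
    with acyclic_arcs show False
      unfolding acyclic_def by blast
  qed
qed

lemma is_interval_between:
  "is_interval n H \<Longrightarrow> a \<in> H \<Longrightarrow> b \<in> H \<Longrightarrow> c \<in> {min a b..max a b} \<Longrightarrow> c \<in> H"
  unfolding is_interval_def by auto

lemma orientation_arc_between:
  assumes "\<forall>H\<in>S. is_interval n H" "orientation S Or"
    and "(a, b) \<in> orientation_arcs S Or" "c \<in> {min a b..max a b}" "c \<noteq> a"
  shows "(a, c) \<in> orientation_arcs S Or"
proof -
  from assms(3) obtain H where "H \<in> S" "Or H = a" "b \<in> H"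
    by (auto simp: mem_orientation_arcs)
  moreover from this have "c \<in> H"
    using assms(1,2,4) is_interval_between unfolding orientation_def by metis
  ultimately show ?thesis
    using assms(5) by (auto simp: mem_orientation_arcs)
qed

text \<open>\<open>a < x \<longleftrightarrow> w < x\<close> says that the path enters x from the same side as it started.\<close>

lemma orientation_arcs_path_crossing:
  assumes "\<forall>H\<in>S. is_interval n H" "orientation S Or"
    and "(w, y) \<in> (orientation_arcs S Or)\<^sup>+"
  shows "x \<in> {min w y..max w y} \<Longrightarrow> x \<noteq> w \<Longrightarrow>
    \<exists>a. (a < x \<longleftrightarrow> w < x) \<and> (w, a) \<in> (orientation_arcs S Or)\<^sup>* \<and> (a, x) \<in> orientation_arcs S Or"
  using assms(3)
proof (induction rule: converse_trancl_induct)
  case (base w)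
  then show ?case
    using orientation_arc_between[OF assms(1,2)] by blast
next
  case (step w w')
  show ?case
  proof (cases "x \<in> {min w' y..max w' y} \<and> x \<noteq> w' \<and> (w' < x \<longleftrightarrow> w < x)")
    case True
    then obtain a where "(a < x \<longleftrightarrow> w < x)" "(w', a) \<in> (orientation_arcs S Or)\<^sup>*"
      "(a, x) \<in> orientation_arcs S Or"
      using step.IH by blast
    with step.hyps(1) show ?thesis
      by (meson converse_rtrancl_into_rtrancl)
  next
    case False
    with step.prems have "x \<in> {min w w'..max w w'}"
      by auto
    then show ?thesis
      using orientation_arc_between[OF assms(1,2) step.hyps(1)] step.prems(2) by blast
  qed
qed

lemma acyclic_orientation_arcs_last_arc_between:
  assumes "\<forall>H\<in>S. is_interval n H" "orientation S Or"
    and acyclic: "acyclic (orientation_arcs S Or)"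
    and "(x, y) \<in> (orientation_arcs S Or)\<^sup>+"
  obtains u where "u \<in> {min x y..max x y}" "(x, u) \<in> (orientation_arcs S Or)\<^sup>*"
    "(u, y) \<in> orientation_arcs S Or"
proof -
  have "x \<noteq> y"
    using acyclic assms(4) unfolding acyclic_def by blast
  then obtain a where a: "(a < y \<longleftrightarrow> x < y)" "(x, a) \<in> (orientation_arcs S Or)\<^sup>*"
    "(a, y) \<in> orientation_arcs S Or"
    using orientation_arcs_path_crossing[OF assms(1,2,4), of y] by auto
  have "a \<in> {min x y..max x y}"
  proof (rule ccontr)
    assume "a \<notin> {min x y..max x y}"
    with a(1) have "x \<in> {min a y..max a y}" "x \<noteq> a"
      by auto
    with a(3) have "(a, x) \<in> orientation_arcs S Or"
      using orientation_arc_between[OF assms(1,2)] by blast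
    with a(2) have "(x, x) \<in> (orientation_arcs S Or)\<^sup>+"
      by (rule rtrancl_into_trancl1)
    with acyclic show False
      unfolding acyclic_def by blast
  qed
  with a that show ?thesis by blast
qed

lemma trancl_Un_single_source_cases:
  assumes "(x, y) \<in> (R \<union> N)\<^sup>+" "Domain N \<subseteq> {j}"
  shows "(x, y) \<in> R\<^sup>+ \<or> (\<exists>v. (x, j) \<in> (R \<union> N)\<^sup>* \<and> (j, v) \<in> N \<and> (v, y) \<in> R\<^sup>*)"
  using assms(1)
proof (induction rule: trancl_induct)
  case (base y)
  then show ?case
    using assms(2) by blast
next
  case (step y z)
  from step.hyps(2) show ?case
  proof
    assume "(y, z) \<in> R"
    with step.IH show ?thesis
      by (meson rtrancl.rtrancl_into_rtrancl trancl.trancl_into_trancl)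
  next
    assume "(y, z) \<in> N"
    moreover from this have "y = j"
      using assms(2) by blast
    ultimately show ?thesis
      using step.hyps(1) by auto
  qed
qed

lemma cycle_Un_single_source:
  assumes "\<not> acyclic (R \<union> N)" "acyclic R" "Domain N \<subseteq> {j}"
  obtains v where "(j, v) \<in> N" "(v, j) \<in> R\<^sup>*"
proof -
  obtain x where "(x, x) \<in> (R \<union> N)\<^sup>+"
    using assms(1) unfolding acyclic_def by blast
  then obtain v where v: "(x, j) \<in> (R \<union> N)\<^sup>*" "(j, v) \<in> N" "(v, x) \<in> R\<^sup>*"
    using trancl_Un_single_source_cases[OF _ assms(3)] assms(2) unfolding acyclic_def by blast
  have "(v, x) \<in> (R \<union> N)\<^sup>*"
    using v(3) rtrancl_mono[of R "R \<union> N"] by blast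
  with v(1,2) have "(j, j) \<in> (R \<union> N)\<^sup>+"
    by (meson UnI2 rtrancl_into_trancl2 rtrancl_trans)
  then show ?thesis
    using trancl_Un_single_source_cases[OF _ assms(3)] assms(2) that unfolding acyclic_def by blast
qed

lemma Union_intervals_common_point:
  fixes M :: "nat set set"
  assumes "finite M" "M \<noteq> {}" "\<forall>I\<in>M. \<exists>a b. I = {a..b}" "c \<in> \<Inter>M"
  shows "\<Union>M = {Min (Min ` M)..Max (Max ` M)}"
proof -
  have finite: "finite I" and convex: "\<forall>x\<in>I. \<forall>y\<in>I. {x..y} \<subseteq> I" if "I \<in> M" for I
    using assms(3) that by auto
  have "Min (Min ` M) \<in> Min ` M" "Max (Max ` M) \<in> Max ` M"
    using assms(1,2) by simp_all
  then obtain I1 I2 where I1: "I1 \<in> M" "Min (Min ` M) = Min I1"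
    and I2: "I2 \<in> M" "Max (Max ` M) = Max I2"
    by blast
  have "c \<in> I1" "c \<in> I2"
    using I1(1) I2(1) assms(4) by auto
  then have "Min I1 \<in> I1" "Max I2 \<in> I2"
    using finite[OF I1(1)] finite[OF I2(1)] by (auto intro!: Min_in Max_in)
  then have "{Min I1..c} \<subseteq> I1" "{c..Max I2} \<subseteq> I2"
    using convex[OF I1(1)] convex[OF I2(1)] \<open>c \<in> I1\<close> \<open>c \<in> I2\<close> by blast+
  moreover have "{Min I1..Max I2} \<subseteq> {Min I1..c} \<union> {c..Max I2}"
    by auto
  ultimately have "{Min (Min ` M)..Max (Max ` M)} \<subseteq> \<Union>M"
    unfolding I1(2) I2(2) using I1(1) I2(1) by blast
  moreover have "x \<in> {Min (Min ` M)..Max (Max ` M)}" if x: "x \<in> \<Union>M" for x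
  proof -
    obtain I where I: "I \<in> M" "x \<in> I"
      using x by blast
    have "Min (Min ` M) \<le> Min I"
      using assms(1) I(1) by simp
    also have "Min I \<le> x"
      using finite[OF I(1)] I(2) by simp
    finally have "Min (Min ` M) \<le> x" .
    have "x \<le> Max I"
      using finite[OF I(1)] I(2) by simp
    also have "Max I \<le> Max (Max ` M)"
      using assms(1) I(1) by simp
    finally show ?thesis
      using \<open>Min (Min ` M) \<le> x\<close> by simp
  qed
  ultimately show ?thesis
    by blast
qed

lemma Union_oriented_to:
  assumes "interval_hypergraph n \<I>" "orientation \<I> A" "i \<in> {1..n}"
  shows "\<Union>{I \<in> \<I>. A I = i} =
    {Min {Min I | I. I \<in> \<I> \<and> A I = i}..Max {Max I | I. I \<in> \<I> \<and> A I = i}}"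
proof -
  let ?M = "{I \<in> \<I>. A I = i}"
  have "{Min I | I. I \<in> \<I> \<and> A I = i} = Min ` ?M" "{Max I | I. I \<in> \<I> \<and> A I = i} = Max ` ?M"
    by auto
  moreover have "\<Union>?M = {Min (Min ` ?M)..Max (Max ` ?M)}"
  proof (rule Union_intervals_common_point)
    have "?M \<subseteq> Pow {1..n}"
      using assms(1) unfolding interval_hypergraph_def is_interval_def by auto
    then show "finite ?M"
      by (rule finite_subset) simp
    have "{i} \<in> \<I>"
      using assms(1,3) unfolding interval_hypergraph_def by blast
    moreover from this have "A {i} = i"
      using assms(2) unfolding orientation_def by blast
    ultimately show "?M \<noteq> {}"
      by blast
    show "\<forall>I\<in>?M. \<exists>a b. I = {a..b}" "i \<in> \<Inter>?M"
      using assms(1,2) unfolding interval_hypergraph_def is_interval_def orientation_def by auto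
  qed
  ultimately show ?thesis
    by simp
qed

lemma flip_eq_if:
  assumes "orientation \<I> A" "orientation \<I> B" "flip \<I> A i j B" "H \<in> \<I>"
  shows "B H = (if A H = i \<and> j \<in> H then j else A H)"
  using assms unfolding orientation_def flip_def by (metis empty_subsetI insert_subset)

lemma flip_obtains_flipped:
  assumes "orientation \<I> A" "orientation \<I> B" "flip \<I> A i j B"
  obtains H where "H \<in> \<I>" "A H = i" "j \<in> H"
  using assms flip_eq_if[OF assms] unfolding flip_def by metis

lemma acyclic_orientation_arcs_same_side:
  assumes "\<forall>H\<in>\<I>. is_interval n H" "orientation \<I> A" "acyclic (orientation_arcs \<I> A)"
    and "J \<in> \<I>" "j \<in> J" "A J \<in> \<Union>{I \<in> \<I>. A I = i} - {i}"
  shows "i < A J \<longleftrightarrow> i < j"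
proof (rule ccontr)
  assume "(i < A J) \<noteq> (i < j)"
  then have "i \<in> {min (A J) j..max (A J) j}"
    by auto
  moreover have "A J \<in> J"
    using assms(2,4) unfolding orientation_def by blast
  ultimately have "i \<in> J"
    using assms(1,4,5) is_interval_between[of n J "A J" j i] by blast
  then have "(A J, i) \<in> orientation_arcs \<I> A"
    using assms(4,6) by (auto simp: mem_orientation_arcs)
  moreover have "(i, A J) \<in> orientation_arcs \<I> A"
    using assms(6) by (auto simp: mem_orientation_arcs)
  ultimately have "(A J, A J) \<in> (orientation_arcs \<I> A)\<^sup>+"
    by (rule trancl_into_trancl[OF r_into_trancl])
  with assms(3) show False
    unfolding acyclic_def by blast
qed

lemma cyclic_flip_obtains_blocking:
  assumes intervals: "\<forall>H\<in>\<I>. is_interval n H"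
    and orA: "orientation \<I> A" and orB: "orientation \<I> B"
    and acyclic_A: "acyclic (orientation_arcs \<I> A)" and flip: "flip \<I> A i j B"
    and cyclic_B: "\<not> acyclic (orientation_arcs \<I> B)"
  obtains J where "J \<in> \<I>" "j \<in> J - {A J}" "A J \<in> \<Union>{I \<in> \<I>. A I = i} - {i}"
proof -
  let ?F = "{H \<in> \<I>. A H = i \<and> j \<in> H}"
  let ?R = "orientation_arcs (\<I> - ?F) A"
  let ?N = "{j} \<times> (\<Union>?F - {j})"
  have "orientation_arcs \<I> B \<subseteq> ?R \<union> ?N"
  proof (rule subrelI)
    fix a b assume "(a, b) \<in> orientation_arcs \<I> B"
    then obtain H where H: "H \<in> \<I>" "B H = a" "b \<in> H" "b \<noteq> a"
      by (auto simp: mem_orientation_arcs)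
    show "(a, b) \<in> ?R \<union> ?N"
    proof (cases "H \<in> ?F")
      case True
      then have "a = j"
        using H(2) flip_eq_if[OF orA orB flip H(1)] by simp
      with True H(3,4) show ?thesis
        by blast
    next
      case False
      then have "A H = a"
        using H(1,2) flip_eq_if[OF orA orB flip H(1)] by auto
      with False H(1,3,4) have "(a, b) \<in> ?R"
        unfolding mem_orientation_arcs by blast
      then show ?thesis ..
    qed
  qed
  then have "\<not> acyclic (?R \<union> ?N)"
    using cyclic_B acyclic_subset by blast
  moreover have acyclic_R: "acyclic ?R"
    using acyclic_A by (rule acyclic_subset) (rule orientation_arcs_mono, blast)
  moreover have "Domain ?N \<subseteq> {j}"
    by auto
  ultimately obtain v where v: "(j, v) \<in> ?N" "(v, j) \<in> ?R\<^sup>*"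
    by (rule cycle_Un_single_source)
  then obtain H where H: "H \<in> \<I>" "A H = i" "j \<in> H" "v \<in> H" "v \<noteq> j"
    by blast
  with v(2) have path: "(v, j) \<in> ?R\<^sup>+"
    by (auto dest: rtranclD)
  txt \<open>The return path from v enters j from a vertex between v and j, hence inside H.\<close>
  have "\<forall>H\<in>\<I> - ?F. is_interval n H" "orientation (\<I> - ?F) A"
    using intervals orA unfolding orientation_def by auto
  then obtain u where u: "u \<in> {min v j..max v j}" "(v, u) \<in> ?R\<^sup>*" "(u, j) \<in> ?R"
    using acyclic_R path by (rule acyclic_orientation_arcs_last_arc_between)
  then obtain J where J: "J \<in> \<I> - ?F" "A J = u" "j \<in> J" "j \<noteq> u"
    unfolding mem_orientation_arcs by blast
  have "u \<in> H"
    using H(1,3,4) u(1) intervals is_interval_between[of n H v j u] by blast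
  with H J show ?thesis
    by (intro that[of J]) auto
qed

lemma blocking_imp_cyclic_flip:
  assumes orA: "orientation \<I> A" and orB: "orientation \<I> B" and flip: "flip \<I> A i j B"
    and J: "J \<in> \<I>" "j \<in> J - {A J}" "A J \<in> \<Union>{I \<in> \<I>. A I = i} - {i}"
  shows "\<not> acyclic (orientation_arcs \<I> B)"
proof -
  obtain I where I: "I \<in> \<I>" "A I = i" "A J \<in> I"
    using J(3) by blast
  have "B J = A J"
    using flip_eq_if[OF orA orB flip J(1)] J(3) by auto
  then have arc_to_j: "(A J, j) \<in> orientation_arcs \<I> B"
    using J(1,2) unfolding mem_orientation_arcs by auto
  have "(j, A J) \<in> (orientation_arcs \<I> B)\<^sup>+"
  proof (cases "j \<in> I")
    case True
    then have "B I = j"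
      using flip_eq_if[OF orA orB flip I(1)] I(2) by simp
    then have "(j, A J) \<in> orientation_arcs \<I> B"
      using I J(2) unfolding mem_orientation_arcs by auto
    then show ?thesis ..
  next
    case False
    then have "B I = i"
      using flip_eq_if[OF orA orB flip I(1)] I(2) by simp
    then have arc_from_i: "(i, A J) \<in> orientation_arcs \<I> B"
      using I J(3) unfolding mem_orientation_arcs by auto
    obtain H where H: "H \<in> \<I>" "A H = i" "j \<in> H"
      using orA orB flip by (rule flip_obtains_flipped)
    moreover have "B H = j"
      using flip_eq_if[OF orA orB flip H(1)] H(2,3) by simp
    moreover have "i \<in> H"
      using orA H(1,2) unfolding orientation_def by blast
    moreover have "i \<noteq> j"
      using flip unfolding flip_def by blast
    ultimately have "(j, i) \<in> orientation_arcs \<I> B"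
      unfolding mem_orientation_arcs by auto
    then show ?thesis
      using arc_from_i by (rule trancl_into_trancl[OF r_into_trancl])
  qed
  then have "(j, j) \<in> (orientation_arcs \<I> B)\<^sup>+"
    using arc_to_j by (rule trancl_into_trancl)
  then show ?thesis
    unfolding acyclic_def by blast
qed

lemma acyclic_flip_iff:
  assumes "\<forall>H\<in>\<I>. is_interval n H" "orientation \<I> A" "orientation \<I> B"
    and "acyclic_orientation \<I> A" "flip \<I> A i j B"
  shows "acyclic_orientation \<I> B \<longleftrightarrow>
    \<not> (\<exists>J\<in>\<I>. j \<in> J - {A J} \<and> A J \<in> \<Union>{I \<in> \<I>. A I = i} - {i})"
proof
  assume "acyclic_orientation \<I> B"
  then show "\<not> (\<exists>J\<in>\<I>. j \<in> J - {A J} \<and> A J \<in> \<Union>{I \<in> \<I>. A I = i} - {i})"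
    using blocking_imp_cyclic_flip[OF assms(2,3,5)]
    unfolding acyclic_orientation_iff_acyclic_arcs by blast
next
  assume no_blocking: "\<not> (\<exists>J\<in>\<I>. j \<in> J - {A J} \<and> A J \<in> \<Union>{I \<in> \<I>. A I = i} - {i})"
  show "acyclic_orientation \<I> B"
    unfolding acyclic_orientation_iff_acyclic_arcs
  proof (rule ccontr)
    assume "\<not> acyclic (orientation_arcs \<I> B)"
    with assms obtain J where "J \<in> \<I>" "j \<in> J - {A J}" "A J \<in> \<Union>{I \<in> \<I>. A I = i} - {i}"
      unfolding acyclic_orientation_iff_acyclic_arcs by (rule cyclic_flip_obtains_blocking)
    with no_blocking show False
      by blast
  qed
qed

lemma acyclic_flip_iff_interval:
  assumes hyp: "interval_hypergraph n \<I>" and orA: "orientation \<I> A" and orB: "orientation \<I> B"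
    and acA: "acyclic_orientation \<I> A" and flip: "flip \<I> A i j B" and i: "i \<in> {1..n}"
  defines "lo \<equiv> Min {Min I | I. I \<in> \<I> \<and> A I = i}"
    and "hi \<equiv> Max {Max I | I. I \<in> \<I> \<and> A I = i}"
  shows "i \<in> {lo..hi}"
    and "acyclic_orientation \<I> B \<longleftrightarrow>
      \<not> (\<exists>J\<in>\<I>. j \<in> J - {A J} \<and> A J \<in> {lo..hi} - {i} \<and> (i < A J \<longleftrightarrow> i < j))"
proof -
  have intervals: "\<forall>H\<in>\<I>. is_interval n H"
    using hyp unfolding interval_hypergraph_def by blast
  have union: "\<Union>{I \<in> \<I>. A I = i} = {lo..hi}"
    unfolding lo_def hi_def using hyp orA i by (rule Union_oriented_to)
  have "{i} \<in> \<I>"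
    using hyp i unfolding interval_hypergraph_def by blast
  moreover from this have "A {i} = i"
    using orA unfolding orientation_def by blast
  ultimately show "i \<in> {lo..hi}"
    unfolding union[symmetric] by blast
  have "acyclic (orientation_arcs \<I> A)"
    using acA by (simp add: acyclic_orientation_iff_acyclic_arcs)
  then have "i < A J \<longleftrightarrow> i < j"
    if "J \<in> \<I>" "j \<in> J - {A J}" "A J \<in> \<Union>{I \<in> \<I>. A I = i} - {i}" for J
    using that intervals orA acyclic_orientation_arcs_same_side by blast
  then show "acyclic_orientation \<I> B \<longleftrightarrow>
      \<not> (\<exists>J\<in>\<I>. j \<in> J - {A J} \<and> A J \<in> {lo..hi} - {i} \<and> (i < A J \<longleftrightarrow> i < j))"
    unfolding acyclic_flip_iff[OF intervals orA orB acA flip] union by blast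
qed

theorem proposition3p15:
  fixes n :: nat and \<I> :: "nat set set" and A :: "nat set \<Rightarrow> nat"
  assumes hyp: "interval_hypergraph n \<I>"
    and orA: "orientation \<I> A"
    and acA: "acyclic_orientation \<I> A"
  shows
   "(\<forall>B i j. i \<in> {1..n} \<longrightarrow> j \<in> {1..n} \<longrightarrow> i < j \<longrightarrow>
       orientation \<I> B \<longrightarrow> flip \<I> A i j B \<longrightarrow>
       (let k = Max {Max I | I. I \<in> \<I> \<and> A I = i} in
         acyclic_orientation \<I> B \<longleftrightarrow>
         \<not> (\<exists>J\<in>\<I>. j \<in> J - {A J} \<and> A J \<in> {i<..k})))
    \<and>
    (\<forall>B i j. i \<in> {1..n} \<longrightarrow> j \<in> {1..n} \<longrightarrow> j < i \<longrightarrow>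
       orientation \<I> B \<longrightarrow> flip \<I> A i j B \<longrightarrow>
       (let k = Min {Min I | I. I \<in> \<I> \<and> A I = i} in
         acyclic_orientation \<I> B \<longleftrightarrow>
         \<not> (\<exists>J\<in>\<I>. j \<in> J - {A J} \<and> A J \<in> {k..<i})))"
proof (intro conjI allI impI)
  fix B i j
  assume i: "i \<in> {1..n}" and "j \<in> {1..n}" and "i < j"
    and orB: "orientation \<I> B" and flip: "flip \<I> A i j B"
  let ?lo = "Min {Min I | I. I \<in> \<I> \<and> A I = i}" and ?hi = "Max {Max I | I. I \<in> \<I> \<and> A I = i}"
  note criterion = acyclic_flip_iff_interval[OF hyp orA orB acA flip i]
  have "A J \<in> {?lo..?hi} - {i} \<and> (i < A J \<longleftrightarrow> i < j) \<longleftrightarrow> A J \<in> {i<..?hi}" for J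
    using criterion(1) \<open>i < j\<close> by auto
  then show "let k = ?hi in
      acyclic_orientation \<I> B \<longleftrightarrow> \<not> (\<exists>J\<in>\<I>. j \<in> J - {A J} \<and> A J \<in> {i<..k})"
    unfolding Let_def criterion(2) by simp
next
  fix B i j
  assume i: "i \<in> {1..n}" and "j \<in> {1..n}" and "j < i"
    and orB: "orientation \<I> B" and flip: "flip \<I> A i j B"
  let ?lo = "Min {Min I | I. I \<in> \<I> \<and> A I = i}" and ?hi = "Max {Max I | I. I \<in> \<I> \<and> A I = i}"
  note criterion = acyclic_flip_iff_interval[OF hyp orA orB acA flip i]
  have "A J \<in> {?lo..?hi} - {i} \<and> (i < A J \<longleftrightarrow> i < j) \<longleftrightarrow> A J \<in> {?lo..<i}" for J
    using criterion(1) \<open>j < i\<close> by auto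
  then show "let k = ?lo in
      acyclic_orientation \<I> B \<longleftrightarrow> \<not> (\<exists>J\<in>\<I>. j \<in> J - {A J} \<and> A J \<in> {k..<i})"
    unfolding Let_def criterion(2) by simp
qed

end
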